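(* Consider the finite configuration of height $3$ and type $(1,2,2,1)$ given by $$p_{0,1}=0,\ p_{1,1}=-\tfrac{\sqrt2}{2}+\mathrm{i},\ p_{1,2}=\tfrac{\sqrt2}{2}+\mathrm{i},\ p_{2,1}=-\tfrac{\sqrt2}{2}+2\mathrm{i},\ p_{2,2}=\tfrac{\sqrt2}{2}+2\mathrm{i},\ p_{3,1}=3\mathrm{i}.$$ This configuration is balanced, non-degenerate and has residual force $\frac{2}{3\mathrm{i}}$.
   Context: For a finite configuration $(p_{k,i})_{0\le k\le h,1\le i\le n_k}$ of type $(n_0,\ldots,n_h)$ with $n_0=n_h=1$: set $c_k=1/n_k$, $n_{-1}=n_{h+1}=0$, $u_{k,i}=p_{k,i}-p_{k,1}$, $\ell_k=p_{k,1}-p_{k-1,1}$; forces $F_{k,i}=2\sum_{j\neq i}\frac{c_k^2}{p_{k,i}-p_{k,j}}-\sum_{j=1}^{n_{k+1}}\frac{c_kc_{k+1}}{p_{k,i}-p_{k+1,j}}-\sum_{j=1}^{n_{k-1}}\frac{c_kc_{k-1}}{p_{k,i}-p_{k-1,j}}$ and $G_k=\sum_{i=1}^{n_k}\sum_{j=1}^{n_{k-1}}\frac{c_kc_{k-1}}{p_{k,i}-p_{k-1,j}}$ ($1\le k\le h$). Balanced means $F_{k,i}=0$ for $1\le k\le h-1$; the residual force is $F_{0,1}$; non-degenerate means the differential of the map $(\ell_1,u_{1,2},\ldots,u_{1,n_1},\ell_2,u_{2,2},\ldots,u_{2,n_2},\ell_3,\ldots,\ell_h)\mapsto(G_1,F_{1,2},\ldots,F_{1,n_1},G_2,F_{2,2},\ldots,F_{2,n_2},G_3,\ldots,G_h)$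 is an isomorphism. *)

theory Defs
  imports Complex_Main
begin

text \<open>A finite configuration of height h and type (n 0, ..., n h) is given by
  h :: nat, n :: nat \<Rightarrow> nat and points p k i :: complex for 0 \<le> k \<le> h, 1 \<le> i \<le> n k
  (values of p and n outside this range are irrelevant).  Conventions n(-1) = n(h+1) = 0
  are implemented by guarding the corresponding sums.\<close>

definition cfg_c :: "(nat \<Rightarrow> nat) \<Rightarrow> nat \<Rightarrow> complex" where
  "cfg_c n k = 1 / of_nat (n k)"

definition cfg_F :: "nat \<Rightarrow> (nat \<Rightarrow> nat) \<Rightarrow> (nat \<Rightarrow> nat \<Rightarrow> complex) \<Rightarrow> nat \<Rightarrow> nat \<Rightarrow> complex" where
  "cfg_F h n p k i =
     2 * (\<Sum>j\<in>{1..n k} - {i}. (cfg_c n k)^2 / (p k i - p k j))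
     - (if k + 1 \<le> h then (\<Sum>j\<in>{1..n (k+1)}. cfg_c n k * cfg_c n (k+1) / (p k i - p (k+1) j)) else 0)
     - (if 1 \<le> k then (\<Sum>j\<in>{1..n (k-1)}. cfg_c n k * cfg_c n (k-1) / (p k i - p (k-1) j)) else 0)"

definition cfg_G :: "(nat \<Rightarrow> nat) \<Rightarrow> (nat \<Rightarrow> nat \<Rightarrow> complex) \<Rightarrow> nat \<Rightarrow> complex" where
  "cfg_G n p k =
     (\<Sum>i\<in>{1..n k}. \<Sum>j\<in>{1..n (k-1)}. cfg_c n k * cfg_c n (k-1) / (p k i - p (k-1) j))"

definition balanced :: "nat \<Rightarrow> (nat \<Rightarrow> nat) \<Rightarrow> (nat \<Rightarrow> nat \<Rightarrow> complex) \<Rightarrow> bool" where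
  "balanced h n p \<longleftrightarrow> (\<forall>k\<in>{1..h-1}. \<forall>i\<in>{1..n k}. cfg_F h n p k i = 0)"

definition residual_force :: "nat \<Rightarrow> (nat \<Rightarrow> nat) \<Rightarrow> (nat \<Rightarrow> nat \<Rightarrow> complex) \<Rightarrow> complex" where
  "residual_force h n p = cfg_F h n p 0 1"

text \<open>The index set V h n = {(k,i). 1 \<le> k \<le> h, 1 \<le> i \<le> n k}: the coordinate
  (k,1) stands for \<ell>_k = p_{k,1} - p_{k-1,1} and (k,i), i \<ge> 2, for u_{k,i} = p_{k,i} - p_{k,1}.
  (Since n h = 1 there are no u_{h,i}.)  On the output side, (k,1) stands for G_k and (k,i),
  i \<ge> 2, for F_{k,i}.\<close>

definition cfg_V :: "nat \<Rightarrow> (nat \<Rightarrow> nat) \<Rightarrow> (nat \<times> nat) set" where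
  "cfg_V h n = {(k,i). 1 \<le> k \<and> k \<le> h \<and> 1 \<le> i \<and> i \<le> n k}"

definition cfg_coords :: "(nat \<Rightarrow> nat \<Rightarrow> complex) \<Rightarrow> nat \<times> nat \<Rightarrow> complex" where
  "cfg_coords p = (\<lambda>(k,i). if i = 1 then p k 1 - p (k-1) 1 else p k i - p k 1)"

definition cfg_points :: "complex \<Rightarrow> (nat \<times> nat \<Rightarrow> complex) \<Rightarrow> nat \<Rightarrow> nat \<Rightarrow> complex" where
  "cfg_points base x k i = base + (\<Sum>m\<in>{1..k}. x (m,1)) + (if i = 1 then 0 else x (k,i))"

definition cfg_map :: "nat \<Rightarrow> (nat \<Rightarrow> nat) \<Rightarrow> complex \<Rightarrow> (nat \<times> nat \<Rightarrow> complex) \<Rightarrow> nat \<times> nat \<Rightarrow> complex" where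
  "cfg_map h n base x = (\<lambda>(k,i). if i = 1 then cfg_G n (cfg_points base x) k
                                 else cfg_F h n (cfg_points base x) k i)"

text \<open>J is the (complex) differential at x0 of the map \<Phi> on the coordinate space
  {v. \<forall>b\<notin>V. v b = 0} \<cong> \<complex>^V, written as a matrix, with the sum-norm.\<close>
definition has_jacobian_at ::
  "((nat \<times> nat \<Rightarrow> complex) \<Rightarrow> nat \<times> nat \<Rightarrow> complex) \<Rightarrow> (nat \<times> nat) set
     \<Rightarrow> (nat \<times> nat \<Rightarrow> complex) \<Rightarrow> (nat \<times> nat \<Rightarrow> nat \<times> nat \<Rightarrow> complex) \<Rightarrow> bool" where
  "has_jacobian_at \<Phi> V x0 J \<longleftrightarrow>
     (\<forall>e>0. \<exists>d>0. \<forall>v. (\<forall>b. b \<notin> V \<longrightarrow> v b = 0) \<and> (\<Sum>b\<in>V. cmod (v b)) < d \<longrightarrow>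
        (\<forall>a\<in>V. cmod (\<Phi> (\<lambda>b. x0 b + v b) a - \<Phi> x0 a - (\<Sum>b\<in>V. J a b * v b)) \<le> e * (\<Sum>b\<in>V. cmod (v b))))"

definition nondegenerate :: "nat \<Rightarrow> (nat \<Rightarrow> nat) \<Rightarrow> (nat \<Rightarrow> nat \<Rightarrow> complex) \<Rightarrow> bool" where
  "nondegenerate h n p \<longleftrightarrow>
     (\<exists>J. has_jacobian_at (cfg_map h n (p 0 1)) (cfg_V h n) (cfg_coords p) J \<and>
          bij_betw (\<lambda>v a. if a \<in> cfg_V h n then (\<Sum>b\<in>cfg_V h n. J a b * v b) else 0)
                   {v. \<forall>b. b \<notin> cfg_V h n \<longrightarrow> v b = 0} {v. \<forall>b. b \<notin> cfg_V h n \<longrightarrow> v b = 0})"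

end

theory Submission
  imports Defs
begin

text \<open>Balancedness and the residual force are finite sums of reciprocals of differences of the
  given points, all of which lie in \<open>\<rat>(\<surd>2, \<i>)\<close>; they are evaluated exactly.
  For non-degeneracy, the force map is differentiable wherever the points of the configuration are
  distinct, its differential being obtained by differentiating each term \<open>c / (p - q)\<close> as
  \<open>- c (dp - dq) / (p - q)\<^sup>2\<close>, where the points depend affinely on the coordinates
  \<open>\<ell>\<^sub>k, u\<^sub>k\<^sub>,\<^sub>i\<close>.  At the given configuration this differential is a
  \<open>5 \<times> 5\<close> matrix over \<open>\<rat>(\<i>\<surd>2)\<close>, and it is invertible because an explicit
  two-sided inverse exists.\<close>

section \<open>Differentiation with respect to finitely many coordinates\<close>

definition norm1 :: "'i set \<Rightarrow> ('i \<Rightarrow> 'a::real_normed_vector) \<Rightarrow> real" where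
  "norm1 V v = (\<Sum>b\<in>V. norm (v b))"

definition coord_nhds :: "'i set \<Rightarrow> ('i \<Rightarrow> 'a::real_normed_vector) filter" where
  "coord_nhds V = (INF d\<in>{0<..}. principal {v. (\<forall>b. b \<notin> V \<longrightarrow> v b = 0) \<and> norm1 V v < d})"

lemma eventually_coord_nhds:
  "eventually P (coord_nhds V) \<longleftrightarrow>
     (\<exists>d>0. \<forall>v. (\<forall>b. b \<notin> V \<longrightarrow> v b = 0) \<and> norm1 V v < d \<longrightarrow> P v)"
  unfolding coord_nhds_def
  by (subst eventually_INF_base) (auto simp: eventually_principal intro!: bexI[of _ "min _ _"])

lemma eventually_norm1_less: "d > 0 \<Longrightarrow> eventually (\<lambda>v. norm1 V v < d) (coord_nhds V)"
  by (auto simp: eventually_coord_nhds)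

lemma eventually_coord_nhds_vanishing:
  "eventually (\<lambda>v. \<forall>b. b \<notin> V \<longrightarrow> v b = 0) (coord_nhds V)"
  by (auto simp: eventually_coord_nhds intro: exI[of _ 1])

definition small_remainder ::
  "'i set \<Rightarrow> (('i \<Rightarrow> 'a::real_normed_vector) \<Rightarrow> 'b::real_normed_vector) \<Rightarrow> bool" where
  "small_remainder V r \<longleftrightarrow>
     (\<forall>e>0. eventually (\<lambda>v. norm (r v) \<le> e * norm1 V v) (coord_nhds V))"

lemma small_remainderD:
  "small_remainder V r \<Longrightarrow> e > 0 \<Longrightarrow> eventually (\<lambda>v. norm (r v) \<le> e * norm1 V v) (coord_nhds V)"
  by (simp add: small_remainder_def)

lemma small_remainder_zero: "small_remainder V (\<lambda>v. 0)"
  by (simp add: small_remainder_def norm1_def sum_nonneg)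

lemma small_remainder_eventually_zero:
  "eventually (\<lambda>v. r v = 0) (coord_nhds V) \<Longrightarrow> small_remainder V r"
  unfolding small_remainder_def
  by (auto elim!: eventually_mono simp: norm1_def sum_nonneg)

lemma small_remainder_add:
  assumes "small_remainder V r" "small_remainder V s"
  shows "small_remainder V (\<lambda>v. r v + s v)"
  unfolding small_remainder_def
proof (intro allI impI)
  fix e :: real assume "e > 0"
  then have "eventually (\<lambda>v. norm (r v) \<le> e/2 * norm1 V v \<and> norm (s v) \<le> e/2 * norm1 V v)
      (coord_nhds V)"
    using assms by (intro eventually_conj small_remainderD) simp_all
  then show "eventually (\<lambda>v. norm (r v + s v) \<le> e * norm1 V v) (coord_nhds V)"
  proof eventually_elim
    case (elim v)
    then show ?case using norm_triangle_ineq[of "r v" "s v"] by linarith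
  qed
qed

lemma small_remainder_scale:
  fixes r :: "('i \<Rightarrow> 'a::real_normed_vector) \<Rightarrow> 'b::real_normed_field"
  assumes "small_remainder V r"
  shows "small_remainder V (\<lambda>v. c * r v)"
  unfolding small_remainder_def
proof (intro allI impI)
  fix e :: real assume "e > 0"
  then have "eventually (\<lambda>v. norm (r v) \<le> e / (norm c + 1) * norm1 V v) (coord_nhds V)"
    using assms by (intro small_remainderD) (auto intro!: divide_pos_pos add_nonneg_pos)
  then show "eventually (\<lambda>v. norm (c * r v) \<le> e * norm1 V v) (coord_nhds V)"
  proof eventually_elim
    case (elim v)
    have "norm (c * r v) \<le> (norm c + 1) * norm (r v)"
      by (simp add: norm_mult mult_right_mono)
    also have "\<dots> \<le> (norm c + 1) * (e / (norm c + 1) * norm1 V v)"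
      using elim by (intro mult_left_mono) auto
    also have "\<dots> = e * norm1 V v"
      using norm_ge_zero[of c] by (simp add: add_nonneg_eq_0_iff)
    finally show ?case .
  qed
qed

lemma small_remainder_diff:
  fixes r :: "('i \<Rightarrow> 'a::real_normed_vector) \<Rightarrow> 'b::real_normed_field"
  assumes "small_remainder V r" "small_remainder V s"
  shows "small_remainder V (\<lambda>v. r v - s v)"
  using small_remainder_add[OF assms(1) small_remainder_scale[OF assms(2), of "-1"]] by simp

lemma norm_le_norm1: "finite V \<Longrightarrow> b \<in> V \<Longrightarrow> norm (v b) \<le> norm1 V v"
  unfolding norm1_def by (rule member_le_sum) auto

lemma norm_linear_le_norm1:
  fixes D :: "'i \<Rightarrow> 'a::real_normed_field"
  assumes "finite V"
  shows "norm (\<Sum>b\<in>V. D b * v b) \<le> (\<Sum>b\<in>V. norm (D b)) * norm1 V v"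
proof -
  have "norm (\<Sum>b\<in>V. D b * v b) \<le> (\<Sum>b\<in>V. norm (D b) * norm (v b))"
    by (rule order_trans[OF norm_sum]) (simp add: norm_mult)
  also have "\<dots> \<le> (\<Sum>b\<in>V. norm (D b) * norm1 V v)"
    using assms by (intro sum_mono mult_left_mono norm_le_norm1) auto
  finally show ?thesis by (simp add: sum_distrib_right)
qed

definition has_coord_gradient ::
  "(('i \<Rightarrow> 'a::real_normed_field) \<Rightarrow> 'a) \<Rightarrow> 'i set \<Rightarrow> ('i \<Rightarrow> 'a) \<Rightarrow> ('i \<Rightarrow> 'a) \<Rightarrow> bool" where
  "has_coord_gradient f V x0 D \<longleftrightarrow>
     small_remainder V (\<lambda>v. f (\<lambda>b. x0 b + v b) - f x0 - (\<Sum>b\<in>V. D b * v b))"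

lemma has_coord_gradient_const: "has_coord_gradient (\<lambda>x. c) V x0 (\<lambda>b. 0)"
  by (simp add: has_coord_gradient_def small_remainder_zero)

lemma has_coord_gradient_coord:
  fixes x0 :: "'i \<Rightarrow> 'a::real_normed_field"
  assumes "finite V"
  shows "has_coord_gradient (\<lambda>x. x b0) V x0 (\<lambda>b. if b = b0 then 1 else 0)"
  unfolding has_coord_gradient_def
proof (rule small_remainder_eventually_zero)
  show "eventually (\<lambda>v. x0 b0 + v b0 - x0 b0 - (\<Sum>b\<in>V. (if b = b0 then 1 else 0) * v b) = 0)
      (coord_nhds V)"
    using eventually_coord_nhds_vanishing
  proof eventually_elim
    case (elim v)
    have "(\<Sum>b\<in>V. (if b = b0 then 1 else 0) * v b) = (\<Sum>b\<in>V. if b = b0 then v b0 else 0)"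
      by (rule sum.cong) auto
    with elim assms show ?case by auto
  qed
qed

lemma has_coord_gradient_add:
  assumes "has_coord_gradient f V x0 D" "has_coord_gradient g V x0 E"
  shows "has_coord_gradient (\<lambda>x. f x + g x) V x0 (\<lambda>b. D b + E b)"
  using small_remainder_add[OF assms[unfolded has_coord_gradient_def]]
  unfolding has_coord_gradient_def by (simp add: algebra_simps sum.distrib)

lemma has_coord_gradient_diff:
  assumes "has_coord_gradient f V x0 D" "has_coord_gradient g V x0 E"
  shows "has_coord_gradient (\<lambda>x. f x - g x) V x0 (\<lambda>b. D b - E b)"
  using small_remainder_diff[OF assms[unfolded has_coord_gradient_def]]
  unfolding has_coord_gradient_def by (simp add: algebra_simps sum_subtractf)

lemma has_coord_gradient_scale:
  assumes "has_coord_gradient f V x0 D"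
  shows "has_coord_gradient (\<lambda>x. c * f x) V x0 (\<lambda>b. c * D b)"
  using small_remainder_scale[OF assms[unfolded has_coord_gradient_def], of c]
  unfolding has_coord_gradient_def by (simp add: algebra_simps sum_distrib_left)

lemma has_coord_gradient_sum:
  assumes "finite S" "\<And>j. j \<in> S \<Longrightarrow> has_coord_gradient (f j) V x0 (D j)"
  shows "has_coord_gradient (\<lambda>x. \<Sum>j\<in>S. f j x) V x0 (\<lambda>b. \<Sum>j\<in>S. D j b)"
  using assms
  by (induction S rule: finite_induct) (auto intro: has_coord_gradient_add has_coord_gradient_const)

lemma has_coord_gradient_if:
  "(P \<Longrightarrow> has_coord_gradient f V x0 D) \<Longrightarrow> (\<not> P \<Longrightarrow> has_coord_gradient g V x0 E) \<Longrightarrow>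
    has_coord_gradient (\<lambda>x. if P then f x else g x) V x0 (\<lambda>b. if P then D b else E b)"
  by (cases P) simp_all

lemma has_coord_gradient_increment_bound:
  assumes "finite V" "has_coord_gradient f V x0 D"
  obtains C where "C > 0"
    "eventually (\<lambda>v. norm (f (\<lambda>b. x0 b + v b) - f x0) \<le> C * norm1 V v) (coord_nhds V)"
proof
  let ?C = "(\<Sum>b\<in>V. norm (D b)) + 1"
  show "?C > 0" by (simp add: add_nonneg_pos sum_nonneg)
  have "eventually (\<lambda>v. norm (f (\<lambda>b. x0 b + v b) - f x0 - (\<Sum>b\<in>V. D b * v b)) \<le> 1 * norm1 V v)
          (coord_nhds V)"
    using assms(2) unfolding has_coord_gradient_def by (rule small_remainderD) simp
  then show "eventually (\<lambda>v. norm (f (\<lambda>b. x0 b + v b) - f x0) \<le> ?C * norm1 V v) (coord_nhds V)"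
  proof eventually_elim
    case (elim v)
    have "norm (\<Sum>b\<in>V. D b * v b) \<le> (\<Sum>b\<in>V. norm (D b)) * norm1 V v"
      using assms(1) by (rule norm_linear_le_norm1)
    with elim show ?case
      using norm_triangle_sub[of "f (\<lambda>b. x0 b + v b) - f x0" "\<Sum>b\<in>V. D b * v b"]
      by (simp add: distrib_right)
  qed
qed

lemma small_remainder_inverse_increment:
  fixes w :: "('i \<Rightarrow> 'a::real_normed_vector) \<Rightarrow> 'b::real_normed_field"
  assumes "a \<noteq> 0" "C > 0" and w: "eventually (\<lambda>v. norm (w v) \<le> C * norm1 V v) (coord_nhds V)"
  shows "small_remainder V (\<lambda>v. inverse (a + w v) - inverse a + w v / a^2)"
  unfolding small_remainder_def
proof (intro allI impI)
  fix e :: real assume "e > 0"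
  define m where "m = norm a"
  have "m > 0" using assms(1) by (simp add: m_def)
  define d where "d = min (m / (2 * C)) (e * m^3 / (2 * C^2))"
  have "d > 0" using \<open>m > 0\<close> \<open>e > 0\<close> assms(2) by (simp add: d_def)
  from w eventually_norm1_less[OF \<open>d > 0\<close>]
  show "eventually (\<lambda>v. norm (inverse (a + w v) - inverse a + w v / a^2) \<le> e * norm1 V v)
      (coord_nhds V)"
  proof eventually_elim
    case (elim v)
    let ?N = "norm1 V v"
    have "?N \<ge> 0" by (simp add: norm1_def sum_nonneg)
    have wN: "norm (w v) \<le> C * ?N" using elim by blast
    have "C * ?N \<le> m / 2" using elim assms(2) by (simp add: d_def field_simps)
    then have "norm (a + w v) \<ge> m / 2"
      using norm_triangle_ineq2[of a "- w v"] wN by (simp add: m_def)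
    then have "a + w v \<noteq> 0" using \<open>m > 0\<close> by auto
    then have "inverse (a + w v) - inverse a + w v / a^2 = (w v)^2 / (a^2 * (a + w v))"
      using assms(1) by (simp add: divide_simps power2_eq_square) (simp add: algebra_simps)
    then have "norm (inverse (a + w v) - inverse a + w v / a^2) = (norm (w v))^2 / (m^2 * norm (a + w v))"
      by (simp add: norm_divide norm_mult norm_power m_def)
    also have "\<dots> \<le> (C * ?N)^2 / (m^2 * (m / 2))"
      using \<open>norm (a + w v) \<ge> m / 2\<close> \<open>m > 0\<close> wN
      by (intro frac_le power_mono mult_left_mono) auto
    also have "\<dots> = ?N * (2 * C^2 * ?N / m^3)"
      using \<open>m > 0\<close> by (simp add: field_simps power2_eq_square power3_eq_cube)
    also have "\<dots> \<le> ?N * e"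
      using elim \<open>?N \<ge> 0\<close> \<open>m > 0\<close> assms(2)
      by (intro mult_left_mono) (auto simp: d_def field_simps)
    finally show ?case by (simp add: mult.commute)
  qed
qed

lemma has_coord_gradient_inverse:
  assumes "finite V" "has_coord_gradient f V x0 D" "f x0 \<noteq> 0"
  shows "has_coord_gradient (\<lambda>x. inverse (f x)) V x0 (\<lambda>b. - D b / (f x0)^2)"
proof -
  define w where "w v = f (\<lambda>b. x0 b + v b) - f x0" for v
  obtain C where "C > 0" "eventually (\<lambda>v. norm (w v) \<le> C * norm1 V v) (coord_nhds V)"
    using has_coord_gradient_increment_bound[OF assms(1,2)] unfolding w_def by blast
  then have "small_remainder V (\<lambda>v. inverse (f x0 + w v) - inverse (f x0) + w v / (f x0)^2)"
    using assms(3) by (intro small_remainder_inverse_increment)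
  moreover have "small_remainder V (\<lambda>v. inverse ((f x0)^2) * (w v - (\<Sum>b\<in>V. D b * v b)))"
    using assms(2) unfolding has_coord_gradient_def w_def by (intro small_remainder_scale)
  ultimately have "small_remainder V (\<lambda>v. inverse (f x0 + w v) - inverse (f x0) + w v / (f x0)^2
                     - inverse ((f x0)^2) * (w v - (\<Sum>b\<in>V. D b * v b)))"
    by (rule small_remainder_diff)
  moreover have "(\<Sum>b\<in>V. - D b / (f x0)^2 * v b) = - inverse ((f x0)^2) * (\<Sum>b\<in>V. D b * v b)" for v
    by (simp add: sum_distrib_left sum_negf divide_inverse mult_ac)
  ultimately show ?thesis
    unfolding has_coord_gradient_def w_def by (simp add: algebra_simps divide_inverse)
qed

lemma has_jacobian_at_coord_gradients:
  assumes "finite V" "\<And>a. a \<in> V \<Longrightarrow> has_coord_gradient (\<lambda>x. \<Phi> x a) V x0 (J a)"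
  shows "has_jacobian_at \<Phi> V x0 J"
  unfolding has_jacobian_at_def
proof (intro allI impI)
  fix e :: real assume "e > 0"
  have "eventually (\<lambda>v. \<forall>a\<in>V. cmod (\<Phi> (\<lambda>b. x0 b + v b) a - \<Phi> x0 a - (\<Sum>b\<in>V. J a b * v b))
          \<le> e * norm1 V v) (coord_nhds V)"
    using assms \<open>e > 0\<close>
    by (intro eventually_ball_finite ballI small_remainderD) (auto simp: has_coord_gradient_def)
  then show "\<exists>d>0. \<forall>v. (\<forall>b. b \<notin> V \<longrightarrow> v b = 0) \<and> (\<Sum>b\<in>V. cmod (v b)) < d \<longrightarrow>
      (\<forall>a\<in>V. cmod (\<Phi> (\<lambda>b. x0 b + v b) a - \<Phi> x0 a - (\<Sum>b\<in>V. J a b * v b))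
        \<le> e * (\<Sum>b\<in>V. cmod (v b)))"
    by (simp add: eventually_coord_nhds norm1_def)
qed

lemma bij_betw_matrix_two_sided_inverse:
  fixes J K :: "'i \<Rightarrow> 'i \<Rightarrow> 'a::comm_ring_1"
  assumes "finite V"
    and "\<And>a c. a \<in> V \<Longrightarrow> c \<in> V \<Longrightarrow> (\<Sum>b\<in>V. J a b * K b c) = (if a = c then 1 else 0)"
    and "\<And>a c. a \<in> V \<Longrightarrow> c \<in> V \<Longrightarrow> (\<Sum>b\<in>V. K a b * J b c) = (if a = c then 1 else 0)"
  shows "bij_betw (\<lambda>v a. if a \<in> V then (\<Sum>b\<in>V. J a b * v b) else 0)
           {v. \<forall>b. b \<notin> V \<longrightarrow> v b = 0} {v. \<forall>b. b \<notin> V \<longrightarrow> v b = 0}"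
proof -
  have apply_product:
    "(\<Sum>b\<in>V. A a b * (if b \<in> V then \<Sum>c\<in>V. B b c * y c else 0)) = y a"
    if "a \<in> V" and AB: "\<And>a c. a \<in> V \<Longrightarrow> c \<in> V \<Longrightarrow> (\<Sum>b\<in>V. A a b * B b c) = (if a = c then 1 else 0)"
    for A B :: "'i \<Rightarrow> 'i \<Rightarrow> 'a" and y a
  proof -
    have "(\<Sum>b\<in>V. A a b * (if b \<in> V then \<Sum>c\<in>V. B b c * y c else 0))
        = (\<Sum>b\<in>V. \<Sum>c\<in>V. A a b * B b c * y c)"
      by (rule sum.cong) (auto simp: sum_distrib_left mult.assoc)
    also have "\<dots> = (\<Sum>c\<in>V. (\<Sum>b\<in>V. A a b * B b c) * y c)"
      by (subst sum.swap) (simp add: sum_distrib_right)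
    also have "\<dots> = (\<Sum>c\<in>V. if a = c then y c else 0)"
      by (rule sum.cong) (auto simp: AB \<open>a \<in> V\<close>)
    also have "\<dots> = y a" using \<open>a \<in> V\<close> assms(1) by simp
    finally show ?thesis .
  qed
  show ?thesis
  proof (rule bij_betw_byWitness[where f'="\<lambda>v a. if a \<in> V then (\<Sum>b\<in>V. K a b * v b) else 0"])
  qed (use apply_product[OF _ assms(2)] apply_product[OF _ assms(3)] in \<open>auto intro!: ext\<close>)
qed


section \<open>The differential of the force map\<close>

lemma cfg_points_coords: "cfg_points (p 0 1) (cfg_coords p) = p"
proof (intro ext)
  fix k i
  have "(\<Sum>m\<in>{1..k}. cfg_coords p (m, 1)) = (\<Sum>m<k. p (Suc m) 1 - p m 1)"
    by (simp add: sum.atLeast1_atMost_eq cfg_coords_def)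
  also have "\<dots> = p k 1 - p 0 1"
    by (rule sum_lessThan_telescope)
  finally have telescope: "(\<Sum>m\<in>{1..k}. cfg_coords p (m, 1)) = p k 1 - p 0 1" .
  show "cfg_points (p 0 1) (cfg_coords p) k i = p k i"
    unfolding cfg_points_def telescope by (simp add: cfg_coords_def)
qed

definition cfg_dpoint :: "nat \<Rightarrow> nat \<Rightarrow> nat \<times> nat \<Rightarrow> complex" where
  "cfg_dpoint k i b =
     (\<Sum>m\<in>{1..k}. if b = (m,1) then 1 else 0) + (if i = 1 then 0 else if b = (k,i) then 1 else 0)"

lemma has_coord_gradient_cfg_points:
  assumes "finite V"
  shows "has_coord_gradient (\<lambda>x. cfg_points base x k i) V x0 (cfg_dpoint k i)"
proof -
  have "has_coord_gradient
      (\<lambda>x. base + (\<Sum>m\<in>{1..k}. x (m,1)) + (if i = 1 then 0 else x (k,i))) V x0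
      (\<lambda>b. 0 + (\<Sum>m\<in>{1..k}. if b = (m,1) then 1 else 0)
           + (if i = 1 then 0 else if b = (k,i) then 1 else 0))"
    by (intro has_coord_gradient_add has_coord_gradient_const has_coord_gradient_sum
        has_coord_gradient_if has_coord_gradient_coord assms finite_atLeastAtMost)
  then show ?thesis by (simp add: cfg_points_def cfg_dpoint_def[abs_def])
qed

definition cfg_dpair ::
  "(nat \<Rightarrow> nat \<Rightarrow> complex) \<Rightarrow> nat \<Rightarrow> nat \<Rightarrow> nat \<Rightarrow> nat \<Rightarrow> nat \<times> nat \<Rightarrow> complex" where
  "cfg_dpair p k i l j b = - (cfg_dpoint k i b - cfg_dpoint l j b) / (p k i - p l j)^2"

lemma has_coord_gradient_cfg_pair:
  assumes "finite V" "cfg_points base x0 k i \<noteq> cfg_points base x0 l j"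
  shows "has_coord_gradient (\<lambda>x. c / (cfg_points base x k i - cfg_points base x l j)) V x0
           (\<lambda>b. c * cfg_dpair (cfg_points base x0) k i l j b)"
proof -
  have "has_coord_gradient (\<lambda>x. cfg_points base x k i - cfg_points base x l j) V x0
          (\<lambda>b. cfg_dpoint k i b - cfg_dpoint l j b)"
    using assms(1) by (intro has_coord_gradient_diff has_coord_gradient_cfg_points)
  moreover have "cfg_points base x0 k i - cfg_points base x0 l j \<noteq> 0"
    using assms(2) by simp
  ultimately have "has_coord_gradient
      (\<lambda>x. c * inverse (cfg_points base x k i - cfg_points base x l j)) V x0
      (\<lambda>b. c * (- (cfg_dpoint k i b - cfg_dpoint l j b)
                / (cfg_points base x0 k i - cfg_points base x0 l j)^2))"
    by (intro has_coord_gradient_scale has_coord_gradient_inverse assms(1))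
  then show ?thesis
    by (simp only: divide_inverse cfg_dpair_def)
qed

definition cfg_dF ::
  "nat \<Rightarrow> (nat \<Rightarrow> nat) \<Rightarrow> (nat \<Rightarrow> nat \<Rightarrow> complex) \<Rightarrow> nat \<Rightarrow> nat \<Rightarrow> nat \<times> nat \<Rightarrow> complex" where
  "cfg_dF h n p k i b =
     2 * (\<Sum>j\<in>{1..n k} - {i}. (cfg_c n k)^2 * cfg_dpair p k i k j b)
     - (if k + 1 \<le> h
        then (\<Sum>j\<in>{1..n (k+1)}. cfg_c n k * cfg_c n (k+1) * cfg_dpair p k i (k+1) j b) else 0)
     - (if 1 \<le> k
        then (\<Sum>j\<in>{1..n (k-1)}. cfg_c n k * cfg_c n (k-1) * cfg_dpair p k i (k-1) j b) else 0)"

definition cfg_dG ::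
  "(nat \<Rightarrow> nat) \<Rightarrow> (nat \<Rightarrow> nat \<Rightarrow> complex) \<Rightarrow> nat \<Rightarrow> nat \<times> nat \<Rightarrow> complex" where
  "cfg_dG n p k b =
     (\<Sum>i\<in>{1..n k}. \<Sum>j\<in>{1..n (k-1)}. cfg_c n k * cfg_c n (k-1) * cfg_dpair p k i (k-1) j b)"

definition cfg_jacobian ::
  "nat \<Rightarrow> (nat \<Rightarrow> nat) \<Rightarrow> (nat \<Rightarrow> nat \<Rightarrow> complex) \<Rightarrow> nat \<times> nat \<Rightarrow> nat \<times> nat \<Rightarrow> complex"
  where
  "cfg_jacobian h n p = (\<lambda>(k,i). if i = 1 then cfg_dG n p k else cfg_dF h n p k i)"

definition cfg_distinct :: "nat \<Rightarrow> (nat \<Rightarrow> nat) \<Rightarrow> (nat \<Rightarrow> nat \<Rightarrow> complex) \<Rightarrow> bool" where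
  "cfg_distinct h n p \<longleftrightarrow>
     (\<forall>k\<le>h. \<forall>l\<le>h. \<forall>i\<in>{1..n k}. \<forall>j\<in>{1..n l}. (k,i) \<noteq> (l,j) \<longrightarrow> p k i \<noteq> p l j)"

lemma cfg_distinctD:
  assumes "cfg_distinct h n p" "k \<le> h" "l \<le> h" "i \<in> {1..n k}" "j \<in> {1..n l}"
    "(k,i) \<noteq> (l,j)"
  shows "p k i \<noteq> p l j"
  using assms(1)[unfolded cfg_distinct_def, rule_format, OF assms(2-6)] .

lemma has_coord_gradient_cfg_pair_sum:
  assumes "finite V" "cfg_distinct h n (cfg_points base x0)" "k \<le> h" "l \<le> h" "i \<in> {1..n k}"
    "S \<subseteq> {1..n l}" "\<And>j. j \<in> S \<Longrightarrow> (k,i) \<noteq> (l,j)"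
  shows "has_coord_gradient (\<lambda>x. \<Sum>j\<in>S. c / (cfg_points base x k i - cfg_points base x l j))
           V x0 (\<lambda>b. \<Sum>j\<in>S. c * cfg_dpair (cfg_points base x0) k i l j b)"
proof (rule has_coord_gradient_sum)
  show "finite S" using assms(6) finite_subset by blast
  fix j assume "j \<in> S"
  with assms show "has_coord_gradient (\<lambda>x. c / (cfg_points base x k i - cfg_points base x l j))
      V x0 (\<lambda>b. c * cfg_dpair (cfg_points base x0) k i l j b)"
    by (intro has_coord_gradient_cfg_pair cfg_distinctD[OF assms(2)]) auto
qed

lemma has_coord_gradient_cfg_F:
  assumes "finite V" "cfg_distinct h n (cfg_points base x0)" "k \<le> h" "i \<in> {1..n k}"
  shows "has_coord_gradient (\<lambda>x. cfg_F h n (cfg_points base x) k i) V x0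
           (cfg_dF h n (cfg_points base x0) k i)"
  unfolding cfg_F_def cfg_dF_def[abs_def] using assms
  by (intro has_coord_gradient_diff has_coord_gradient_scale has_coord_gradient_if
      has_coord_gradient_const has_coord_gradient_cfg_pair_sum) auto

lemma has_coord_gradient_cfg_G:
  assumes "finite V" "cfg_distinct h n (cfg_points base x0)" "1 \<le> k" "k \<le> h"
  shows "has_coord_gradient (\<lambda>x. cfg_G n (cfg_points base x) k) V x0
           (cfg_dG n (cfg_points base x0) k)"
  unfolding cfg_G_def cfg_dG_def[abs_def] using assms
  by (intro has_coord_gradient_sum has_coord_gradient_cfg_pair_sum) auto

lemma finite_cfg_V: "finite (cfg_V h n)"
proof (rule finite_subset)
  show "cfg_V h n \<subseteq> (SIGMA k:{1..h}. {1..n k})"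
    by (auto simp: cfg_V_def)
qed auto

lemma cfg_map_has_jacobian:
  assumes "cfg_distinct h n p"
  shows "has_jacobian_at (cfg_map h n (p 0 1)) (cfg_V h n) (cfg_coords p)
           (cfg_jacobian h n p)"
proof (rule has_jacobian_at_coord_gradients[OF finite_cfg_V])
  fix a assume "a \<in> cfg_V h n"
  then obtain k i where a: "a = (k,i)" "1 \<le> k" "k \<le> h" "i \<in> {1..n k}"
    by (auto simp: cfg_V_def)
  have distinct: "cfg_distinct h n (cfg_points (p 0 1) (cfg_coords p))"
    using assms by (simp only: cfg_points_coords)
  show "has_coord_gradient (\<lambda>x. cfg_map h n (p 0 1) x a) (cfg_V h n) (cfg_coords p)
      (cfg_jacobian h n p a)"
    using has_coord_gradient_cfg_G[OF finite_cfg_V distinct, of k, unfolded cfg_points_coords]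
      has_coord_gradient_cfg_F[OF finite_cfg_V distinct, of k i, unfolded cfg_points_coords] a
    by (simp add: cfg_map_def cfg_jacobian_def)
qed


section \<open>The configuration of type \<open>(1,2,2,1)\<close>\<close>

text \<open>Rewriting with \<open>Qsqrt2i_arith\<close> turns
  every expression built from rationals, \<open>\<surd>2\<close> and \<open>\<i>\<close> into this normal form, so identities in
  \<open>\<rat>(\<surd>2, \<i>)\<close> are decided by real arithmetic on the four coordinates.\<close>
definition Qsqrt2i :: "real \<Rightarrow> real \<Rightarrow> real \<Rightarrow> real \<Rightarrow> complex" where
  "Qsqrt2i a b c d = Complex (a + b * sqrt 2) (c + d * sqrt 2)"

lemma Qsqrt2i_eq_iff:
  "Qsqrt2i a b c d = Qsqrt2i a' b' c' d' \<longleftrightarrow>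
     a + b * sqrt 2 = a' + b' * sqrt 2 \<and> c + d * sqrt 2 = c' + d' * sqrt 2"
  by (simp add: Qsqrt2i_def complex_eq_iff)

lemma Qsqrt2i_add: "Qsqrt2i a b c d + Qsqrt2i a' b' c' d' = Qsqrt2i (a+a') (b+b') (c+c') (d+d')"
  by (simp add: Qsqrt2i_def complex_eq_iff algebra_simps)

lemma Qsqrt2i_diff: "Qsqrt2i a b c d - Qsqrt2i a' b' c' d' = Qsqrt2i (a-a') (b-b') (c-c') (d-d')"
  by (simp add: Qsqrt2i_def complex_eq_iff algebra_simps)

lemma Qsqrt2i_minus: "- Qsqrt2i a b c d = Qsqrt2i (-a) (-b) (-c) (-d)"
  by (simp add: Qsqrt2i_def complex_eq_iff algebra_simps)

lemma Qsqrt2i_mult: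
  "Qsqrt2i a b c d * Qsqrt2i a' b' c' d' =
     Qsqrt2i (a*a' + 2*b*b' - c*c' - 2*d*d') (a*b' + b*a' - c*d' - d*c')
             (a*c' + c*a' + 2*(b*d' + d*b')) (a*d' + d*a' + b*c' + c*b')"
  by (simp add: Qsqrt2i_def complex_eq_iff algebra_simps flip: mult.assoc)

lemma Qsqrt2i_0: "0 = Qsqrt2i 0 0 0 0" and Qsqrt2i_1: "1 = Qsqrt2i 1 0 0 0"
  and Qsqrt2i_numeral: "numeral w = Qsqrt2i (numeral w) 0 0 0"
  and Qsqrt2i_imaginary_unit: "\<i> = Qsqrt2i 0 0 1 0"
  and Qsqrt2i_sqrt2: "complex_of_real (sqrt 2) = Qsqrt2i 0 1 0 0"
  by (simp_all add: Qsqrt2i_def complex_eq_iff)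

text \<open>Multiply by the conjugate in \<open>\<i>\<close>, then by the conjugate in \<open>\<surd>2\<close>.\<close>
lemma Qsqrt2i_inverse:
  fixes a b c d :: real
  defines "m \<equiv> a*a + 2*b*b + c*c + 2*d*d" and "k \<equiv> 2*a*b + 2*c*d"
  assumes "m^2 - 2*k^2 \<noteq> 0"
  shows "inverse (Qsqrt2i a b c d) =
           Qsqrt2i a b (-c) (-d) * Qsqrt2i (m / (m^2 - 2*k^2)) (-k / (m^2 - 2*k^2)) 0 0"
proof -
  define D where "D = m^2 - 2*k^2"
  have conj: "Qsqrt2i a b c d * Qsqrt2i a b (-c) (-d) = Qsqrt2i m k 0 0"
    by (simp add: Qsqrt2i_mult m_def k_def algebra_simps)
  have "m * (m / D) + 2 * k * (- k / D) = 1" "m * (- k / D) + k * (m / D) = 0"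
    using assms(3) by (auto simp: D_def divide_simps power2_eq_square)
  then have rational: "Qsqrt2i m k 0 0 * Qsqrt2i (m / D) (-k / D) 0 0 = 1"
    by (simp add: Qsqrt2i_mult Qsqrt2i_1)
  have "Qsqrt2i a b c d * (Qsqrt2i a b (-c) (-d) * Qsqrt2i (m / D) (-k / D) 0 0) = 1"
    by (simp only: mult.assoc[symmetric] conj rational)
  then show ?thesis
    unfolding D_def by (rule inverse_unique)
qed

text \<open>Only complex divisions are turned into inverses; rewriting real divisions as well makes
  the simplifier loop.\<close>
lemma Qsqrt2i_divide: "z / Qsqrt2i a b c d = z * inverse (Qsqrt2i a b c d)"
  by (rule divide_inverse)

lemmas Qsqrt2i_arith = Qsqrt2i_add Qsqrt2i_diff Qsqrt2i_minus Qsqrt2i_mult Qsqrt2i_inverse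
  Qsqrt2i_0 Qsqrt2i_1 Qsqrt2i_numeral Qsqrt2i_imaginary_unit Qsqrt2i_sqrt2
  power2_eq_square Qsqrt2i_divide

definition n1221 :: "nat \<Rightarrow> nat" where
  "n1221 = (\<lambda>k. if k = 1 \<or> k = 2 then 2 else 1)"

definition p1221 :: "nat \<Rightarrow> nat \<Rightarrow> complex" where
  "p1221 = (\<lambda>k i.
     if k = 0 then 0
     else if k = 1 then (if i = 1 then - complex_of_real (sqrt 2 / 2) + \<i> else complex_of_real (sqrt 2 / 2) + \<i>)
     else if k = 2 then (if i = 1 then - complex_of_real (sqrt 2 / 2) + 2 * \<i> else complex_of_real (sqrt 2 / 2) + 2 * \<i>)
     else 3 * \<i>)"

lemma n1221_simps [simp]: "n1221 0 = 1" "n1221 (Suc 0) = 2" "n1221 2 = 2" "n1221 3 = 1"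
  by (simp_all add: n1221_def)

lemma cfg_c_n1221 [simp]:
  "cfg_c n1221 0 = 1" "cfg_c n1221 (Suc 0) = 1/2" "cfg_c n1221 2 = 1/2" "cfg_c n1221 3 = 1"
  by (simp_all add: cfg_c_def)

lemma p1221_Qsqrt2i [simp]:
  "p1221 0 (Suc 0) = Qsqrt2i 0 0 0 0"
  "p1221 (Suc 0) (Suc 0) = Qsqrt2i 0 (-1/2) 1 0" "p1221 (Suc 0) 2 = Qsqrt2i 0 (1/2) 1 0"
  "p1221 2 (Suc 0) = Qsqrt2i 0 (-1/2) 2 0" "p1221 2 2 = Qsqrt2i 0 (1/2) 2 0"
  "p1221 3 (Suc 0) = Qsqrt2i 0 0 3 0"
  by (simp_all add: p1221_def Qsqrt2i_arith)

lemma nat_index_simps: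
  "Suc (Suc 0) = 2" "Suc 2 = 3" "{Suc 0..2} = {1, 2::nat}" "{Suc 0, 2} - {2} = {1::nat}"
  by auto

lemma points_1221:
  "k \<le> 3 \<Longrightarrow> i \<in> {1..n1221 k} \<Longrightarrow> (k,i) \<in> {(0,1),(1,1),(1,2),(2,1),(2,2),(3,1)}"
  by (auto simp: n1221_def numeral_3_eq_3 le_Suc_eq)

lemma balanced_1221: "balanced 3 n1221 p1221"
  unfolding balanced_def
proof (intro ballI)
  fix k i assume "k \<in> {1..3-1}" "i \<in> {1..n1221 k}"
  then have "(k,i) \<in> {(1,1),(1,2),(2,1),(2,2)}" using points_1221[of k i] by auto
  then show "cfg_F 3 n1221 p1221 k i = 0"
    by (auto simp: cfg_F_def nat_index_simps Qsqrt2i_arith)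
qed

lemma residual_force_1221: "residual_force 3 n1221 p1221 = 2 / (3 * \<i>)"
  by (simp add: residual_force_def cfg_F_def nat_index_simps Qsqrt2i_arith)

lemma cfg_distinct_1221: "cfg_distinct 3 n1221 p1221"
  unfolding cfg_distinct_def
proof (intro allI impI ballI)
  fix k l i j
  assume "k \<le> 3" "l \<le> 3" "i \<in> {1..n1221 k}" "j \<in> {1..n1221 l}" "(k,i) \<noteq> (l,j)"
  then show "p1221 k i \<noteq> p1221 l j"
    using points_1221[of k i] points_1221[of l j] by (auto simp: Qsqrt2i_eq_iff)
qed

definition V1221 :: "(nat \<times> nat) set" where
  "V1221 = {(1,1),(1,2),(2,1),(2,2),(3,1)}"

lemma cfg_V_1221: "cfg_V 3 n1221 = V1221"
  unfolding cfg_V_def V1221_def by (auto simp: n1221_def numeral_3_eq_3 le_Suc_eq)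

definition isqrt2 :: complex where
  "isqrt2 = \<i> * complex_of_real (sqrt 2)"

lemma Qsqrt2i_isqrt2: "isqrt2 = Qsqrt2i 0 0 0 1"
  by (simp add: isqrt2_def Qsqrt2i_def complex_eq_iff)

text \<open>Rows and columns are indexed by \<open>\<ell>\<^sub>1, u\<^sub>1\<^sub>,\<^sub>2, \<ell>\<^sub>2, u\<^sub>2\<^sub>,\<^sub>2, \<ell>\<^sub>3\<close>
  (respectively \<open>G\<^sub>1, F\<^sub>1\<^sub>,\<^sub>2, G\<^sub>2, F\<^sub>2\<^sub>,\<^sub>2, G\<^sub>3\<close>), in this order.\<close>
definition position_1221 :: "nat \<times> nat \<Rightarrow> nat" where
  "position_1221 a =
     (if a = (1,1) then 0 else if a = (1,2) then 1 else if a = (2,1) then 2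
      else if a = (2,2) then 3 else 4)"

definition J1221 :: "nat \<times> nat \<Rightarrow> nat \<times> nat \<Rightarrow> complex" where
  "J1221 a b =
     [[2/9,                  1/9 + 2/9 * isqrt2,    0,                     0,                     0],
      [-1/9 - 2/9 * isqrt2,  -7/12 - 1/6 * isqrt2,  2/9 - 1/18 * isqrt2,   1/4,                   0],
      [0,                    -2/9 + 1/18 * isqrt2,  4/9,                   2/9 + 1/18 * isqrt2,   0],
      [0,                    1/4,                   -2/9 - 1/18 * isqrt2,  -7/12 + 1/6 * isqrt2,  1/9 - 2/9 * isqrt2],
      [0,                    0,                     0,                     -1/9 + 2/9 * isqrt2,   2/9]]
     ! position_1221 a ! position_1221 b"

definition K1221 :: "nat \<times> nat \<Rightarrow> nat \<times> nat \<Rightarrow> complex" where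
  "K1221 a b =
     [[59/24 + 7/6 * isqrt2,   7/12 + 7/6 * isqrt2,   -7/12 - 5/12 * isqrt2,  1/12 + 1/6 * isqrt2,   -3/8],
      [-7/12 - 7/6 * isqrt2,   -7/6,                  1/2 - 1/6 * isqrt2,     -1/6,                  1/12 - 1/6 * isqrt2],
      [-7/12 - 5/12 * isqrt2,  -1/2 + 1/6 * isqrt2,   8/3,                    1/2 + 1/6 * isqrt2,    -7/12 + 5/12 * isqrt2],
      [-1/12 - 1/6 * isqrt2,   -1/6,                  -1/2 - 1/6 * isqrt2,    -7/6,                  7/12 - 7/6 * isqrt2],
      [-3/8,                   -1/12 + 1/6 * isqrt2,  -7/12 + 5/12 * isqrt2,  -7/12 + 7/6 * isqrt2,  59/24 - 7/6 * isqrt2]]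
     ! position_1221 a ! position_1221 b"

lemma cfg_jacobian_1221:
  assumes "a \<in> V1221" "b \<in> V1221"
  shows "cfg_jacobian 3 n1221 p1221 a b = J1221 a b"
  using assms unfolding V1221_def
  by (auto simp: cfg_jacobian_def cfg_dF_def cfg_dG_def cfg_dpair_def cfg_dpoint_def J1221_def
      position_1221_def nat_index_simps Qsqrt2i_arith Qsqrt2i_isqrt2)

lemma J1221_K1221:
  "a \<in> V1221 \<Longrightarrow> c \<in> V1221 \<Longrightarrow> (\<Sum>b\<in>V1221. J1221 a b * K1221 b c) = (if a = c then 1 else 0)"
  unfolding V1221_def
  by (auto simp: J1221_def K1221_def position_1221_def Qsqrt2i_arith Qsqrt2i_isqrt2)

lemma K1221_J1221:
  "a \<in> V1221 \<Longrightarrow> c \<in> V1221 \<Longrightarrow> (\<Sum>b\<in>V1221. K1221 a b * J1221 b c) = (if a = c then 1 else 0)"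
  unfolding V1221_def
  by (auto simp: J1221_def K1221_def position_1221_def Qsqrt2i_arith Qsqrt2i_isqrt2)

lemma nondegenerate_1221: "nondegenerate 3 n1221 p1221"
proof -
  have "bij_betw (\<lambda>v a. if a \<in> V1221 then (\<Sum>b\<in>V1221. cfg_jacobian 3 n1221 p1221 a b * v b) else 0)
          {v. \<forall>b. b \<notin> V1221 \<longrightarrow> v b = 0} {v. \<forall>b. b \<notin> V1221 \<longrightarrow> v b = 0}"
  proof (rule bij_betw_matrix_two_sided_inverse[where K = K1221])
    show "finite V1221" by (simp add: V1221_def)
  qed (simp_all add: cfg_jacobian_1221 J1221_K1221 K1221_J1221 cong: sum.cong)
  then show ?thesis
    unfolding nondegenerate_def cfg_V_1221[symmetric]
    using cfg_map_has_jacobian[OF cfg_distinct_1221] by blast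
qed

theorem proposition3p4:
  fixes n :: "nat \<Rightarrow> nat" and p :: "nat \<Rightarrow> nat \<Rightarrow> complex"
  assumes "n = (\<lambda>k. if k = 1 \<or> k = 2 then 2 else 1)"
    and "p = (\<lambda>k i.
           if k = 0 then 0
           else if k = 1 then (if i = 1 then - complex_of_real (sqrt 2 / 2) + \<i> else complex_of_real (sqrt 2 / 2) + \<i>)
           else if k = 2 then (if i = 1 then - complex_of_real (sqrt 2 / 2) + 2 * \<i> else complex_of_real (sqrt 2 / 2) + 2 * \<i>)
           else 3 * \<i>)"
  shows "balanced 3 n p \<and> nondegenerate 3 n p \<and> residual_force 3 n p = 2 / (3 * \<i>)"
proof -
  have "n = n1221" "p = p1221"
    using assms by (simp_all only: n1221_def p1221_def)
  then show ?thesis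
    using balanced_1221 nondegenerate_1221 residual_force_1221 by simp
qed

end
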